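(* Assume the setting described in the context. Let $\lambda\in\mathbb{R}^F$ satisfy $$\lambda_f\ge\sum_{\sigma\in f:\,\sigma'\in A(f,\sigma)}\rho(\sigma'\mid f,\sigma)\frac{\omega(\sigma)}{\omega(\sigma')}\quad\text{for all }f\in F,\ \sigma'\in\Omega.$$ Then for every word $W$ and every state $\sigma\in\Omega$: $$\sum_{\tau:\ \text{word }W,\ \text{last state }\sigma}p(\tau)\le\gamma^{\mathrm{init}}\lambda_W\,\omega(\sigma),\qquad\sum_{\tau:\ \text{word }W}p(\tau)\le\gamma^{\mathrm{init}}\lambda_W,$$ where the sums range over walks $\tau$ with the indicated word (and, in the first sum, with last state $\sigma$).
   Context: Setting: $\Omega$ is a finite set and $F$ a finite set of flaws, each a nonempty subset of $\Omega$; $F_\sigma=\{f:\sigma\in f\}$. For $\sigma\in\Omega$ and $f\in F_\sigma$ there is a probability distribution $\rho(\cdot\mid f,\sigma)$ on $\Omega$ with support $A(f,\sigma)$. $\omega$ is a probability distribution on $\Omega$ with $\omega(\sigma)>0$ for all $\sigma$, and $\omega^{\mathrm{init}}$ is a probability distribution on $\Omega$. Set $\gamma^{\mathrm{init}}=\max_\sigma\omega^{\mathrm{init}}(\sigma)/\omega(\sigma)$. A walk is $\tau=\sigma_1\xrightarrow{w_1}\sigma_2\cdots\xrightarrow{w_t}\sigma_{t+1}$ with $w_i\in F_{\sigma_i}$ and $\sigma_{i+1}\in A(w_i,\sigma_i)$; the walk with $t=0$ consists of a single state. Its word is $w_1\ldots w_t$, and $p(\tau)=\omega^{\mathrm{init}}(\sigma_1)\prod_{i=1}^t\rho(\sigma_{i+1}\mid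 w_i,\sigma_i)$. For a word $W=w_1\ldots w_t$, $\lambda_W=\prod_i\lambda_{w_i}$. *)

theory Defs
  imports Complex_Main
begin

text \<open>States have type 'a, the state space is a finite set Omega :: 'a set.
  Flaws are subsets of Omega; F :: 'a set set.
  rho f s s' is the probability rho(s' | f, s).\<close>

definition actions :: "'a set \<Rightarrow> ('a set \<Rightarrow> 'a \<Rightarrow> 'a \<Rightarrow> real) \<Rightarrow> 'a set \<Rightarrow> 'a \<Rightarrow> 'a set" where
  "actions Omega rho f s = {s' \<in> Omega. rho f s s' > 0}"

definition is_walk ::
  "'a set \<Rightarrow> 'a set set \<Rightarrow> ('a set \<Rightarrow> 'a \<Rightarrow> 'a \<Rightarrow> real) \<Rightarrow> 'a list \<Rightarrow> 'a set list \<Rightarrow> bool" where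
  "is_walk Omega F rho ss W \<longleftrightarrow>
     length ss = Suc (length W) \<and> ss ! 0 \<in> Omega \<and>
     (\<forall>i < length W. W ! i \<in> F \<and> ss ! i \<in> W ! i \<and>
        ss ! Suc i \<in> actions Omega rho (W ! i) (ss ! i))"

definition walks_with_word ::
  "'a set \<Rightarrow> 'a set set \<Rightarrow> ('a set \<Rightarrow> 'a \<Rightarrow> 'a \<Rightarrow> real) \<Rightarrow> 'a set list \<Rightarrow> 'a list set" where
  "walks_with_word Omega F rho W = {ss. is_walk Omega F rho ss W}"

definition walk_prob ::
  "('a \<Rightarrow> real) \<Rightarrow> ('a set \<Rightarrow> 'a \<Rightarrow> 'a \<Rightarrow> real) \<Rightarrow> 'a list \<Rightarrow> 'a set list \<Rightarrow> real" where
  "walk_prob omega_init rho ss W =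
     omega_init (ss ! 0) * (\<Prod>i < length W. rho (W ! i) (ss ! i) (ss ! Suc i))"

definition word_weight :: "('a set \<Rightarrow> real) \<Rightarrow> 'a set list \<Rightarrow> real" where
  "word_weight lam W = (\<Prod>i < length W. lam (W ! i))"

definition gamma_init :: "'a set \<Rightarrow> ('a \<Rightarrow> real) \<Rightarrow> ('a \<Rightarrow> real) \<Rightarrow> real" where
  "gamma_init Omega omega_init omega = Max ((\<lambda>s. omega_init s / omega s) ` Omega)"

end

theory Submission
  imports Defs
begin

text \<open>Write \<open>P\<^sub>W(s)\<close> (\<open>walk_mass_at\<close>) for the total probability of the walks with
  word \<open>W\<close> ending at \<open>s\<close>. Appending a flaw \<open>f\<close> to the word gives the recursion
  \<open>P\<^sub>W\<^sub>f(s') = (\<Sum>s\<in>f. \<rho>(s'|f,s) P\<^sub>W(s))\<close>, so the bound \<open>P\<^sub>W(s) \<le> \<gamma> \<lambda>\<^sub>W \<omega>(s)\<close>,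
  which holds for the empty word by the choice of \<open>\<gamma> = \<gamma>_init\<close>, is preserved exactly by the
  hypothesis on \<open>\<lambda>\<^sub>f\<close>. Summing over \<open>s\<close> and using \<open>\<Sum> \<omega> = 1\<close> bounds all walks with word \<open>W\<close>.\<close>

definition walk_mass_at ::
  "'a set \<Rightarrow> 'a set set \<Rightarrow> ('a set \<Rightarrow> 'a \<Rightarrow> 'a \<Rightarrow> real) \<Rightarrow> ('a \<Rightarrow> real) \<Rightarrow> 'a set list \<Rightarrow> 'a \<Rightarrow> real"
where
  "walk_mass_at Omega F rho omega_init W s =
     (\<Sum>ss\<in>{ss \<in> walks_with_word Omega F rho W. last ss = s}. walk_prob omega_init rho ss W)"

lemma last_eq_nth_if_length_Suc: "length xs = Suc n \<Longrightarrow> last xs = xs ! n"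
  by (cases xs rule: rev_cases) (auto simp: nth_append)

lemma is_walk_snoc_iff:
  "is_walk Omega F rho (ss @ [x]) (W @ [f]) \<longleftrightarrow>
     is_walk Omega F rho ss W \<and> f \<in> F \<and> last ss \<in> f \<and> x \<in> actions Omega rho f (last ss)"
proof (cases "length ss = Suc (length W)")
  case True
  then have "last ss = ss ! length W" by (rule last_eq_nth_if_length_Suc)
  with True show ?thesis
    unfolding is_walk_def by (simp add: All_less_Suc nth_append cong: conj_cong) auto
next
  case False
  then show ?thesis by (auto simp: is_walk_def)
qed

lemma is_walk_states_subset:
  assumes "is_walk Omega F rho ss W"
  shows "set ss \<subseteq> Omega"
proof
  fix y assume "y \<in> set ss"
  then obtain i where i: "i < length ss" "ss ! i = y" by (auto simp: in_set_conv_nth)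
  show "y \<in> Omega"
  proof (cases i)
    case 0
    then show ?thesis using assms i by (simp add: is_walk_def)
  next
    case (Suc j)
    with assms i have "j < length W" by (simp add: is_walk_def)
    with assms have "ss ! Suc j \<in> actions Omega rho (W ! j) (ss ! j)"
      by (simp add: is_walk_def)
    then show ?thesis using Suc i by (simp add: actions_def)
  qed
qed

lemma finite_walks_with_word:
  assumes "finite Omega"
  shows "finite (walks_with_word Omega F rho W)"
proof (rule finite_subset)
  show "walks_with_word Omega F rho W \<subseteq> {ss. set ss \<subseteq> Omega \<and> length ss = Suc (length W)}"
  proof
    fix ss assume "ss \<in> walks_with_word Omega F rho W"
    then have walk: "is_walk Omega F rho ss W" by (simp add: walks_with_word_def)
    then show "ss \<in> {ss. set ss \<subseteq> Omega \<and> length ss = Suc (length W)}"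
      using is_walk_states_subset[OF walk] by (simp add: is_walk_def)
  qed
  show "finite {ss. set ss \<subseteq> Omega \<and> length ss = Suc (length W)}"
    using finite_lists_length_eq[OF assms] by simp
qed

lemma walk_prob_snoc:
  assumes "length ss = Suc (length W)"
  shows "walk_prob omega_init rho (ss @ [x]) (W @ [f]) = walk_prob omega_init rho ss W * rho f (last ss) x"
proof -
  have "(\<Prod>i<length W. rho ((W @ [f]) ! i) ((ss @ [x]) ! i) ((ss @ [x]) ! Suc i))
      = (\<Prod>i<length W. rho (W ! i) (ss ! i) (ss ! Suc i))"
    using assms by (intro prod.cong refl) (simp add: nth_append)
  with assms last_eq_nth_if_length_Suc[OF assms] show ?thesis
    unfolding walk_prob_def by (simp add: nth_append mult.assoc)
qed

lemma word_weight_snoc: "word_weight lam (W @ [f]) = word_weight lam W * lam f"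
  by (simp add: word_weight_def nth_append)

lemma word_weight_nonneg: "(\<And>f. f \<in> set W \<Longrightarrow> lam f \<ge> 0) \<Longrightarrow> word_weight lam W \<ge> 0"
  unfolding word_weight_def by (intro prod_nonneg) simp

lemma walks_ending_at_snoc:
  assumes "f \<in> F"
  shows "{ss \<in> walks_with_word Omega F rho (W @ [f]). last ss = y}
       = (\<lambda>ss. ss @ [y]) `
           {ss \<in> walks_with_word Omega F rho W. last ss \<in> f \<and> y \<in> actions Omega rho f (last ss)}"
proof (intro subset_antisym subsetI)
  fix ss assume "ss \<in> {ss \<in> walks_with_word Omega F rho (W @ [f]). last ss = y}"
  then have walk: "is_walk Omega F rho ss (W @ [f])" and "last ss = y"
    by (auto simp: walks_with_word_def)
  then obtain ss' where "ss = ss' @ [y]" by (cases ss rule: rev_cases) (auto simp: is_walk_def)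
  with walk show "ss \<in> (\<lambda>ss. ss @ [y]) ` {ss \<in> walks_with_word Omega F rho W.
      last ss \<in> f \<and> y \<in> actions Omega rho f (last ss)}"
    by (auto simp: walks_with_word_def is_walk_snoc_iff)
qed (auto simp: walks_with_word_def is_walk_snoc_iff assms)

lemma walk_mass_at_Nil:
  assumes "s \<in> Omega"
  shows "walk_mass_at Omega F rho omega_init [] s = omega_init s"
proof -
  have "{ss \<in> walks_with_word Omega F rho []. last ss = s} = {[s]}"
    using assms by (auto simp: walks_with_word_def is_walk_def length_Suc_conv)
  then show ?thesis by (simp add: walk_mass_at_def walk_prob_def)
qed

lemma walk_mass_at_snoc:
  assumes "finite Omega" and "f \<in> F" and "finite f"
  shows "walk_mass_at Omega F rho omega_init (W @ [f]) y
       = (\<Sum>x\<in>{x \<in> f. y \<in> actions Omega rho f x}. rho f x y * walk_mass_at Omega F rho omega_init W x)"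
proof -
  let ?walks = "walks_with_word Omega F rho W"
  let ?B = "{x \<in> f. y \<in> actions Omega rho f x}"
  let ?S = "{ss \<in> ?walks. last ss \<in> f \<and> y \<in> actions Omega rho f (last ss)}"
  have inj: "inj_on (\<lambda>ss. ss @ [y]) ?S" by (auto simp: inj_on_def)
  have fin_S: "finite ?S"
    using finite_walks_with_word[OF assms(1)] by (rule finite_subset[rotated]) auto
  have fin_B: "finite ?B" using assms(3) by simp
  have "walk_mass_at Omega F rho omega_init (W @ [f]) y
      = (\<Sum>ss\<in>?S. walk_prob omega_init rho ss W * rho f (last ss) y)"
    unfolding walk_mass_at_def walks_ending_at_snoc[OF assms(2)] sum.reindex[OF inj] o_def
    by (intro sum.cong refl walk_prob_snoc) (auto simp: walks_with_word_def is_walk_def)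
  also have "\<dots> = (\<Sum>x\<in>?B. \<Sum>ss\<in>{ss \<in> ?S. last ss = x}. walk_prob omega_init rho ss W * rho f (last ss) y)"
    by (rule sum.group[symmetric, OF fin_S fin_B]) auto
  also have "\<dots> = (\<Sum>x\<in>?B. rho f x y * walk_mass_at Omega F rho omega_init W x)"
  proof (intro sum.cong refl)
    fix x assume "x \<in> ?B"
    then have "{ss \<in> ?S. last ss = x} = {ss \<in> ?walks. last ss = x}" by auto
    then show "(\<Sum>ss\<in>{ss \<in> ?S. last ss = x}. walk_prob omega_init rho ss W * rho f (last ss) y)
             = rho f x y * walk_mass_at Omega F rho omega_init W x"
      by (simp add: walk_mass_at_def sum_distrib_left mult.commute)
  qed
  finally show ?thesis .
qed

lemma sum_walk_prob_eq_sum_walk_mass_at: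
  assumes "finite Omega"
  shows "(\<Sum>ss\<in>walks_with_word Omega F rho W. walk_prob omega_init rho ss W)
       = (\<Sum>x\<in>Omega. walk_mass_at Omega F rho omega_init W x)"
  unfolding walk_mass_at_def
proof (rule sum.group[symmetric, OF finite_walks_with_word[OF assms] assms])
  show "last ` walks_with_word Omega F rho W \<subseteq> Omega"
  proof
    fix y assume "y \<in> last ` walks_with_word Omega F rho W"
    then obtain ss where walk: "is_walk Omega F rho ss W" and y: "y = last ss"
      by (auto simp: walks_with_word_def)
    then have "ss \<noteq> []" by (auto simp: is_walk_def)
    then show "y \<in> Omega" using is_walk_states_subset[OF walk] y by auto
  qed
qed

lemma walk_mass_at_le:
  assumes fin_Omega: "finite Omega"
    and flaws: "\<And>f. f \<in> F \<Longrightarrow> f \<subseteq> Omega"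
    and rho_nonneg: "\<And>f x y. f \<in> F \<Longrightarrow> x \<in> f \<Longrightarrow> y \<in> Omega \<Longrightarrow> rho f x y \<ge> 0"
    and omega_pos: "\<And>x. x \<in> Omega \<Longrightarrow> omega x > 0"
    and init_le: "\<And>x. x \<in> Omega \<Longrightarrow> omega_init x \<le> gamma * omega x"
    and gamma_nonneg: "gamma \<ge> 0"
    and lam_nonneg: "\<And>f. f \<in> F \<Longrightarrow> lam f \<ge> 0"
    and lam_bound: "\<And>f y. f \<in> F \<Longrightarrow> y \<in> Omega \<Longrightarrow>
        lam f \<ge> (\<Sum>x\<in>{x \<in> f. y \<in> actions Omega rho f x}. rho f x y * omega x / omega y)"
    and "set W \<subseteq> F" and "y \<in> Omega"
  shows "walk_mass_at Omega F rho omega_init W y \<le> gamma * word_weight lam W * omega y"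
  using assms(9,10)
proof (induction W arbitrary: y rule: rev_induct)
  case Nil
  then show ?case by (simp add: walk_mass_at_Nil init_le word_weight_def)
next
  case (snoc f W)
  then have f: "f \<in> F" and W: "set W \<subseteq> F" by auto
  let ?B = "{x \<in> f. y \<in> actions Omega rho f x}"
  let ?c = "gamma * word_weight lam W"
  have "word_weight lam W \<ge> 0" using W lam_nonneg by (intro word_weight_nonneg) auto
  with gamma_nonneg have c_nonneg: "?c \<ge> 0" by simp
  have "walk_mass_at Omega F rho omega_init (W @ [f]) y
      = (\<Sum>x\<in>?B. rho f x y * walk_mass_at Omega F rho omega_init W x)"
    using flaws[OF f] fin_Omega f by (intro walk_mass_at_snoc) (auto intro: finite_subset)
  also have "\<dots> \<le> (\<Sum>x\<in>?B. rho f x y * (?c * omega x))"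
    using snoc.IH[OF W] flaws[OF f] rho_nonneg[OF f _ snoc.prems(2)]
    by (intro sum_mono mult_left_mono) auto
  also have "\<dots> = ?c * omega y * (\<Sum>x\<in>?B. rho f x y * omega x / omega y)"
    using omega_pos[OF snoc.prems(2)] by (simp add: sum_distrib_left field_simps)
  also have "\<dots> \<le> ?c * omega y * lam f"
    using lam_bound[OF f snoc.prems(2)] c_nonneg omega_pos[OF snoc.prems(2)]
    by (intro mult_left_mono) auto
  finally show ?case by (simp add: word_weight_snoc mult_ac)
qed

lemma omega_init_le_gamma_init:
  assumes "finite Omega" and "x \<in> Omega" and "omega x > 0"
  shows "omega_init x \<le> gamma_init Omega omega_init omega * omega x"
proof -
  have "omega_init x / omega x \<le> gamma_init Omega omega_init omega"
    unfolding gamma_init_def using assms by (intro Max_ge) auto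
  then show ?thesis using assms(3) by (simp add: divide_le_eq)
qed

lemma gamma_init_nonneg:
  assumes "finite Omega" and "x \<in> Omega" and "omega_init x \<ge> 0" and "omega x > 0"
  shows "gamma_init Omega omega_init omega \<ge> 0"
proof -
  have "omega_init x / omega x \<le> gamma_init Omega omega_init omega"
    unfolding gamma_init_def using assms by (intro Max_ge) auto
  moreover have "omega_init x / omega x \<ge> 0" using assms by simp
  ultimately show ?thesis by linarith
qed

theorem lemma1:
  fixes Omega :: "'a set" and F :: "'a set set"
    and rho :: "'a set \<Rightarrow> 'a \<Rightarrow> 'a \<Rightarrow> real"
    and omega omega_init :: "'a \<Rightarrow> real"
    and lam :: "'a set \<Rightarrow> real"
    and W :: "'a set list" and s :: 'a
  assumes fin_Omega: "finite Omega"
    and fin_F: "finite F"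
    and flaws: "\<And>f. f \<in> F \<Longrightarrow> f \<noteq> {} \<and> f \<subseteq> Omega"
    and rho_nonneg: "\<And>f x y. f \<in> F \<Longrightarrow> x \<in> f \<Longrightarrow> y \<in> Omega \<Longrightarrow> rho f x y \<ge> 0"
    and rho_out: "\<And>f x y. f \<in> F \<Longrightarrow> x \<in> f \<Longrightarrow> y \<notin> Omega \<Longrightarrow> rho f x y = 0"
    and rho_sum: "\<And>f x. f \<in> F \<Longrightarrow> x \<in> f \<Longrightarrow> (\<Sum>y\<in>Omega. rho f x y) = 1"
    and omega_pos: "\<And>x. x \<in> Omega \<Longrightarrow> omega x > 0"
    and omega_sum: "(\<Sum>x\<in>Omega. omega x) = 1"
    and init_nonneg: "\<And>x. x \<in> Omega \<Longrightarrow> omega_init x \<ge> 0"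
    and init_sum: "(\<Sum>x\<in>Omega. omega_init x) = 1"
    and lam_bound: "\<And>f s'. f \<in> F \<Longrightarrow> s' \<in> Omega \<Longrightarrow>
        lam f \<ge> (\<Sum>x\<in>{x \<in> f. s' \<in> actions Omega rho f x}. rho f x s' * omega x / omega s')"
    and W_word: "set W \<subseteq> F"
    and s_in: "s \<in> Omega"
  shows "((\<Sum>ss\<in>{ss \<in> walks_with_word Omega F rho W. last ss = s}. walk_prob omega_init rho ss W)
           \<le> gamma_init Omega omega_init omega * word_weight lam W * omega s) \<and>
         ((\<Sum>ss\<in>walks_with_word Omega F rho W. walk_prob omega_init rho ss W)
           \<le> gamma_init Omega omega_init omega * word_weight lam W)"
proof -
  let ?c = "gamma_init Omega omega_init omega * word_weight lam W"
  have lam_nonneg: "lam f \<ge> 0" if f: "f \<in> F" for f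
  proof -
    have "(\<Sum>x\<in>{x \<in> f. s \<in> actions Omega rho f x}. rho f x s * omega x / omega s) \<ge> 0"
      using flaws[OF f] rho_nonneg[OF f _ s_in] omega_pos s_in
      by (intro sum_nonneg divide_nonneg_pos mult_nonneg_nonneg) (auto simp: less_imp_le)
    then show ?thesis using lam_bound[OF f s_in] by linarith
  qed
  have init_le: "omega_init x \<le> gamma_init Omega omega_init omega * omega x" if "x \<in> Omega" for x
    using fin_Omega that omega_pos[OF that] by (rule omega_init_le_gamma_init)
  have gamma_nonneg: "gamma_init Omega omega_init omega \<ge> 0"
    using gamma_init_nonneg[where omega_init = omega_init] fin_Omega s_in init_nonneg omega_pos
    by blast
  have mass_le: "walk_mass_at Omega F rho omega_init W y \<le> ?c * omega y" if "y \<in> Omega" for y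
    by (rule walk_mass_at_le[OF fin_Omega _ rho_nonneg omega_pos init_le gamma_nonneg
          lam_nonneg lam_bound W_word that]) (use flaws in blast)
  have "(\<Sum>ss\<in>walks_with_word Omega F rho W. walk_prob omega_init rho ss W)
      = (\<Sum>y\<in>Omega. walk_mass_at Omega F rho omega_init W y)"
    using fin_Omega by (rule sum_walk_prob_eq_sum_walk_mass_at)
  also have "\<dots> \<le> (\<Sum>y\<in>Omega. ?c * omega y)" using mass_le by (rule sum_mono)
  also have "\<dots> = ?c" by (simp add: sum_distrib_left[symmetric] omega_sum)
  finally show ?thesis using mass_le[OF s_in] by (simp add: walk_mass_at_def)
qed

end
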